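(* Consider the amortized variant of the algorithmic framework described below with parameters $\eta=1$, $\gamma\in(0,1)$ and $\xi=\gamma^{-1}+\tfrac12$. Then the framework maintains $\ell_i\le(1+\eta)T\,(=2T)$ for every machine $i$, where $\ell_i=\sum_{j\in \hat J_i\cup\check J_i}p_j/s_i$ is the total load of machine $i$ and $T$ is the current guess.
   Context: Problem: machines $1,\dots,m$ with speeds $s_1\ge s_2\ge\dots\ge s_m>0$; jobs arrive online, job $j$ has size $p_j>0$; the load of job $j$ on machine $i$ is $p_j/s_i$. Framework (amortized variant): it keeps a guess $T$, for each machine $i$ a partition of its jobs into old jobs $\hat J_i$ and new jobs $\check J_i$, and a potential $\pi_i$ per machine. Machine $i$ is saturated if $\check\ell_i:=\sum_{j\in\check J_i}p_j/s_i\ge T$, and $\eta$-eligible for job $j$ if $p_j/s_i\le \eta T$. Let $\tilde{\mathcal M}(\eta,j)$ be the set of machines that are $\eta$-eligible for $j$ and not saturated. When the first job $j_1$ arrives, set $T=p_{j_1}/s_1$ and place $j_1$ on machine 1. When a later job $j^*$ arrives, put it into a priority queue $Q$ (larger size = higher priority) and run: while $Q$ is nonempty, remove the largest job $j'$ from $Q$; then repeat: if $\tilde{\mathcal M}(\eta,j')\ne\emptyset$, choose a slowest machine $i'$ in it, move every $j\in\hat J_{i'}$ with $p_j\ge \eta^{-1}p_{j'}$ from $\hat J_{i'}$ to $\check J_{i'}$, and if $i'$ is still not saturated stop repeating; otherwise set $T:=\xi T$ and for every machine $i$ move all jobs of $\check J_i$ to $\hat J_i$ and set $\pi_i=0$.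 After a machine $i'$ is found, set $\pi:=\gamma p_{j'}+\pi_{i'}$; go through the jobs $j\in\hat J_{i'}$ in non-increasing order of size and, whenever $p_j\le\pi$, set $\pi:=\pi-p_j$ and move $j$ from $\hat J_{i'}$ into $Q$ (removing it from $i'$). Finally add $j'$ to $\check J_{i'}$ and set $\pi_{i'}:=\pi$. *)

theory Defs
  imports Complex_Main
begin

(* Machines are indexed 0..<m (machine 1 of the paper is index 0), speeds s,
   job identifiers are natural numbers with sizes p. *)

datatype phase = Idle | Search nat | Place nat nat

record st =
  T :: real
  hatJ :: "nat \<Rightarrow> nat set"     (* old jobs of each machine *)
  chkJ :: "nat \<Rightarrow> nat set"     (* new jobs of each machine *)
  pot :: "nat \<Rightarrow> real"
  queue :: "nat set"
  arrived :: "nat set"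
  ph :: phase

definition new_load :: "(nat \<Rightarrow> real) \<Rightarrow> (nat \<Rightarrow> real) \<Rightarrow> st \<Rightarrow> nat \<Rightarrow> real" where
  "new_load s p \<sigma> i = (\<Sum>j\<in>chkJ \<sigma> i. p j) / s i"

definition total_load :: "(nat \<Rightarrow> real) \<Rightarrow> (nat \<Rightarrow> real) \<Rightarrow> st \<Rightarrow> nat \<Rightarrow> real" where
  "total_load s p \<sigma> i = (\<Sum>j\<in>hatJ \<sigma> i \<union> chkJ \<sigma> i. p j) / s i"

definition saturated :: "(nat \<Rightarrow> real) \<Rightarrow> (nat \<Rightarrow> real) \<Rightarrow> st \<Rightarrow> nat \<Rightarrow> bool" where
  "saturated s p \<sigma> i \<longleftrightarrow> new_load s p \<sigma> i \<ge> T \<sigma>"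

definition eligible :: "(nat \<Rightarrow> real) \<Rightarrow> (nat \<Rightarrow> real) \<Rightarrow> real \<Rightarrow> st \<Rightarrow> nat \<Rightarrow> nat \<Rightarrow> bool" where
  "eligible s p eta \<sigma> j i \<longleftrightarrow> p j / s i \<le> eta * T \<sigma>"

definition Mt :: "nat \<Rightarrow> (nat \<Rightarrow> real) \<Rightarrow> (nat \<Rightarrow> real) \<Rightarrow> real \<Rightarrow> st \<Rightarrow> nat \<Rightarrow> nat set" where
  "Mt m s p eta \<sigma> j = {i. i < m \<and> eligible s p eta \<sigma> j i \<and> \<not> saturated s p \<sigma> i}"

fun greedy :: "(nat \<Rightarrow> real) \<Rightarrow> real \<Rightarrow> nat list \<Rightarrow> nat set \<times> real" where
  "greedy p \<pi> [] = ({}, \<pi>)"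
| "greedy p \<pi> (j # js) =
     (if p j \<le> \<pi> then (let (R, \<pi>') = greedy p (\<pi> - p j) js in (insert j R, \<pi>'))
      else greedy p \<pi> js)"

definition init_st :: st where
  "init_st = \<lparr>T = 0, hatJ = (\<lambda>_. {}), chkJ = (\<lambda>_. {}), pot = (\<lambda>_. 0),
              queue = {}, arrived = {}, ph = Idle\<rparr>"

definition move_step :: "(nat \<Rightarrow> real) \<Rightarrow> real \<Rightarrow> st \<Rightarrow> nat \<Rightarrow> nat \<Rightarrow> st" where
  "move_step p eta \<sigma> j i =
     \<sigma>\<lparr>hatJ := (hatJ \<sigma>)(i := {k \<in> hatJ \<sigma> i. \<not> (p k \<ge> p j / eta)}),
       chkJ := (chkJ \<sigma>)(i := chkJ \<sigma> i \<union> {k \<in> hatJ \<sigma> i. p k \<ge> p j / eta})\<rparr>"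

(* All states reachable by the (amortized variant of the) framework, for every
   online input sequence and every resolution of ties. *)
inductive reach :: "nat \<Rightarrow> (nat \<Rightarrow> real) \<Rightarrow> (nat \<Rightarrow> real) \<Rightarrow> real \<Rightarrow> real \<Rightarrow> real \<Rightarrow> st \<Rightarrow> bool"
  for m s p eta gamma xi where
  init: "reach m s p eta gamma xi init_st"
| first: "\<lbrakk> reach m s p eta gamma xi \<sigma>; arrived \<sigma> = {}; ph \<sigma> = Idle \<rbrakk> \<Longrightarrow>
     reach m s p eta gamma xi (\<sigma>\<lparr>T := p j / s 0, chkJ := (chkJ \<sigma>)(0 := insert j (chkJ \<sigma> 0)),
                                 arrived := {j}\<rparr>)"
| arrive: "\<lbrakk> reach m s p eta gamma xi \<sigma>; arrived \<sigma> \<noteq> {}; j \<notin> arrived \<sigma>; ph \<sigma> = Idle;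
            queue \<sigma> = {} \<rbrakk> \<Longrightarrow>
     reach m s p eta gamma xi (\<sigma>\<lparr>queue := {j}, arrived := insert j (arrived \<sigma>)\<rparr>)"
| pop: "\<lbrakk> reach m s p eta gamma xi \<sigma>; ph \<sigma> = Idle; j \<in> queue \<sigma>; \<forall>k\<in>queue \<sigma>. p k \<le> p j \<rbrakk> \<Longrightarrow>
     reach m s p eta gamma xi (\<sigma>\<lparr>queue := queue \<sigma> - {j}, ph := Search j\<rparr>)"
| move: "\<lbrakk> reach m s p eta gamma xi \<sigma>; ph \<sigma> = Search j; i \<in> Mt m s p eta \<sigma> j;
          \<forall>k\<in>Mt m s p eta \<sigma> j. s i \<le> s k \<rbrakk> \<Longrightarrow>
     reach m s p eta gamma xi
       (if saturated s p (move_step p eta \<sigma> j i) i then move_step p eta \<sigma> j i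
        else (move_step p eta \<sigma> j i)\<lparr>ph := Place j i\<rparr>)"
| raise: "\<lbrakk> reach m s p eta gamma xi \<sigma>; ph \<sigma> = Search j; Mt m s p eta \<sigma> j = {} \<rbrakk> \<Longrightarrow>
     reach m s p eta gamma xi (\<sigma>\<lparr>T := xi * T \<sigma>, hatJ := (\<lambda>i. hatJ \<sigma> i \<union> chkJ \<sigma> i),
                                 chkJ := (\<lambda>_. {}), pot := (\<lambda>_. 0)\<rparr>)"
| place: "\<lbrakk> reach m s p eta gamma xi \<sigma>; ph \<sigma> = Place j i; distinct xs; set xs = hatJ \<sigma> i;
           sorted_wrt (\<lambda>a b. p b \<le> p a) xs; greedy p (gamma * p j + pot \<sigma> i) xs = (R, \<pi>) \<rbrakk> \<Longrightarrow>
     reach m s p eta gamma xi (\<sigma>\<lparr>hatJ := (hatJ \<sigma>)(i := hatJ \<sigma> i - R),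
                                 chkJ := (chkJ \<sigma>)(i := insert j (chkJ \<sigma> i)),
                                 pot := (pot \<sigma>)(i := \<pi>), queue := queue \<sigma> \<union> R, ph := Idle\<rparr>)"

end

theory Submission
  imports Defs
begin

(*
  Measure loads in job size, so that machine i has capacity c = T s_i, and call
  Phi = gamma p(new jobs) + p(old jobs) - pi the potential excess of the machine.
  Phi never exceeds 2c/xi: a placement adds gamma p_j to the first term and the
  greedy removal spends exactly the budget gamma p_j + pi on old jobs, so Phi is
  unchanged; turning old jobs into new ones lowers Phi because gamma <= 1; and
  raising the guess resets Phi to the whole load, which is at most 2c = 2(xi c)/xi.
  Old jobs have size at most c/xi, since they had size at most c when the guess
  was last raised.  Right after a placement either no old job is left, and the
  load is below c + c because the machine was unsaturated and j eligible, or some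
  old job k survived the greedy removal, so pi < p_k <= c/xi and
  gamma * load <= Phi + gamma pi < (2 + gamma) c/xi <= 2 gamma c
  by the choice xi = 1/gamma + 1/2.  Neither the order of the speeds nor the
  order in which the greedy removal scans the old jobs plays any role.
*)

lemma greedy_subset: "greedy p b xs = (R, b') \<Longrightarrow> R \<subseteq> set xs"
  by (induction xs arbitrary: b R) (fastforce split: if_splits prod.splits)+

lemma greedy_sum: "distinct xs \<Longrightarrow> greedy p b xs = (R, b') \<Longrightarrow> sum p R + b' = b"
proof (induction xs arbitrary: b R)
  case (Cons j js)
  show ?case
  proof (cases "p j \<le> b")
    case True
    obtain R' where R': "greedy p (b - p j) js = (R', b')" "R = insert j R'"
      using Cons.prems True by (auto split: prod.splits)
    have "j \<notin> R'" using greedy_subset[OF R'(1)] Cons.prems(1) by auto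
    then show ?thesis using Cons.IH[OF _ R'(1)] Cons.prems(1) R'(2)
      greedy_subset[OF R'(1)] by (simp add: finite_subset)
  qed (use Cons in auto)
qed simp

lemma greedy_nonneg: "greedy p b xs = (R, b') \<Longrightarrow> 0 \<le> b \<Longrightarrow> 0 \<le> b'"
  by (induction xs arbitrary: b R) (fastforce split: if_splits prod.splits)+

lemma greedy_le: "(\<And>k. 0 \<le> p k) \<Longrightarrow> greedy p b xs = (R, b') \<Longrightarrow> b' \<le> b"
proof (induction xs arbitrary: b R)
  case (Cons j js)
  show ?case
  proof (cases "p j \<le> b")
    case True
    then obtain R' where "greedy p (b - p j) js = (R', b')"
      using Cons.prems(2) by (auto split: prod.splits)
    then show ?thesis using Cons.IH[OF Cons.prems(1)] Cons.prems(1)[of j] by fastforce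
  qed (use Cons in auto)
qed simp

lemma greedy_skipped_gt:
  "(\<And>k. 0 \<le> p k) \<Longrightarrow> greedy p b xs = (R, b') \<Longrightarrow> k \<in> set xs - R \<Longrightarrow> b' < p k"
proof (induction xs arbitrary: b R)
  case (Cons j js)
  show ?case
  proof (cases "p j \<le> b")
    case True
    then obtain R' where "greedy p (b - p j) js = (R', b')" "R = insert j R'"
      using Cons.prems(2) by (auto split: prod.splits)
    then show ?thesis using Cons by auto
  next
    case False
    then have g: "greedy p b js = (R, b')" using Cons.prems(2) by simp
    show ?thesis
    proof (cases "k = j")
      case True
      then show ?thesis using False greedy_le[OF Cons.prems(1) g] by simp
    qed (use Cons g in auto)
  qed
qed simp

(* c is the capacity T s_i of the machine; H, C and \<pi> are its old jobs, new jobs and potential. *)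
definition machine_inv ::
    "(nat \<Rightarrow> real) \<Rightarrow> real \<Rightarrow> real \<Rightarrow> real \<Rightarrow> nat set \<Rightarrow> nat set \<Rightarrow> real \<Rightarrow> bool" where
  "machine_inv p \<gamma> \<xi> c H C \<pi> \<longleftrightarrow> finite H \<and> finite C \<and> H \<inter> C = {} \<and> 0 \<le> c \<and> 0 \<le> \<pi>
     \<and> \<gamma> * sum p C + sum p H - \<pi> \<le> 2 * c / \<xi>
     \<and> (\<forall>k\<in>H. \<pi> < p k \<and> p k \<le> c / \<xi>) \<and> (\<forall>k\<in>C. p k \<le> c)
     \<and> sum p H + sum p C \<le> 2 * c"

lemma machine_inv_empty:
  assumes "0 \<le> c" "0 \<le> \<pi>" "0 \<le> \<xi>"
  shows "machine_inv p \<gamma> \<xi> c {} {} \<pi>"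
proof -
  have "0 \<le> 2 * c / \<xi>"
    using assms by simp
  then have "- \<pi> \<le> 2 * c / \<xi>"
    using \<open>0 \<le> \<pi>\<close> by linarith
  then show ?thesis
    using assms unfolding machine_inv_def by simp
qed

lemma machine_inv_singleton:
  assumes "0 \<le> p j" "p j \<le> c" "0 \<le> \<pi>" "0 < \<xi>" "\<gamma> * \<xi> \<le> 2"
  shows "machine_inv p \<gamma> \<xi> c {} {j} \<pi>"
proof -
  have "\<gamma> * p j * \<xi> \<le> 2 * c"
    using mult_right_mono[OF assms(5,1)] assms(2) by (simp add: mult_ac)
  then have "\<gamma> * p j \<le> 2 * c / \<xi>"
    using assms(4) by (simp add: le_divide_eq)
  then show ?thesis using assms unfolding machine_inv_def by simp
qed

lemma machine_inv_load:
  "machine_inv p \<gamma> \<xi> c H C \<pi> \<Longrightarrow> sum p (H \<union> C) \<le> 2 * c"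
  unfolding machine_inv_def by (simp add: sum.union_disjoint)

lemma machine_inv_move:
  assumes inv: "machine_inv p \<gamma> \<xi> c H C \<pi>" and "K \<subseteq> H"
    and "\<And>k. 0 \<le> p k" "\<gamma> \<le> 1" "1 \<le> \<xi>"
  shows "machine_inv p \<gamma> \<xi> c (H - K) (C \<union> K) \<pi>"
proof -
  have fin: "finite H" "finite C" "finite K" "H \<inter> C = {}"
    using inv \<open>K \<subseteq> H\<close> unfolding machine_inv_def by (auto intro: finite_subset)
  have sH: "sum p (H - K) = sum p H - sum p K"
    using fin \<open>K \<subseteq> H\<close> by (simp add: sum_diff)
  have sC: "sum p (C \<union> K) = sum p C + sum p K"
    using fin \<open>K \<subseteq> H\<close> by (subst sum.union_disjoint) auto
  have "0 \<le> sum p K"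
    using assms(3) by (simp add: sum_nonneg)
  then have "\<gamma> * sum p K \<le> sum p K"
    using mult_right_mono[OF \<open>\<gamma> \<le> 1\<close>] by fastforce
  moreover have "c / \<xi> \<le> c"
    using inv \<open>1 \<le> \<xi>\<close> unfolding machine_inv_def by (simp add: divide_le_eq mult_le_cancel_left1)
  ultimately show ?thesis
    using inv fin \<open>K \<subseteq> H\<close> sH sC unfolding machine_inv_def
    by (fastforce simp: distrib_left)
qed

lemma machine_inv_raise:
  assumes inv: "machine_inv p \<gamma> \<xi> c H C \<pi>" and "\<And>k. 0 < p k" "1 \<le> \<xi>"
  shows "machine_inv p \<gamma> \<xi> (\<xi> * c) (H \<union> C) {} 0"
proof -
  have "c \<le> \<xi> * c" "c / \<xi> \<le> c"
    using inv \<open>1 \<le> \<xi>\<close> unfolding machine_inv_def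
    by (simp_all add: divide_le_eq mult_le_cancel_right1 mult_le_cancel_left1)
  moreover have "\<xi> * c / \<xi> = c"
    using \<open>1 \<le> \<xi>\<close> by simp
  ultimately show ?thesis
    using inv machine_inv_load[OF inv] assms(2) unfolding machine_inv_def by fastforce
qed

lemma potential_load_bound:
  fixes a b \<pi> c \<gamma> \<xi> :: real
  assumes "0 < \<gamma>" "\<gamma> \<le> 1" "1 / \<gamma> + 1 / 2 \<le> \<xi>" "0 \<le> c"
    and potential: "\<gamma> * b + a - \<pi> \<le> 2 * c / \<xi>"
    and "\<pi> \<le> a" "\<pi> < c / \<xi>"
  shows "a + b < 2 * c"
proof -
  have "0 < 1 / \<gamma> + 1 / 2"
    using assms(1) by (simp add: add_pos_pos)
  then have "0 < \<xi>"
    using assms(3) by linarith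
  have "2 + \<gamma> \<le> 2 * \<gamma> * \<xi>"
    using assms(1,3) by (simp add: field_simps)
  then have "(2 + \<gamma>) * c \<le> (2 * \<gamma> * \<xi>) * c"
    using \<open>0 \<le> c\<close> by (rule mult_right_mono)
  then have "(2 + \<gamma>) * (c / \<xi>) \<le> 2 * \<gamma> * c"
    using \<open>0 < \<xi>\<close> by (simp add: divide_le_eq mult_ac)
  have "\<gamma> * (a + b) = (\<gamma> * b + a - \<pi>) - (1 - \<gamma>) * (a - \<pi>) + \<gamma> * \<pi>"
    by (simp add: algebra_simps)
  also have "\<dots> < 2 * c / \<xi> + \<gamma> * (c / \<xi>)"
    using potential assms(1,2,6,7) mult_nonneg_nonneg[of "1 - \<gamma>" "a - \<pi>"]
      mult_strict_left_mono[OF assms(7,1)] by linarith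
  also have "\<dots> \<le> \<gamma> * (2 * c)"
    using \<open>(2 + \<gamma>) * (c / \<xi>) \<le> 2 * \<gamma> * c\<close> by (simp add: algebra_simps)
  finally show ?thesis
    using assms(1) by simp
qed

lemma machine_inv_place:
  assumes inv: "machine_inv p \<gamma> \<xi> c H C \<pi>"
    and "\<And>k. 0 \<le> p k" "0 < \<gamma>" "\<gamma> \<le> 1" "1 / \<gamma> + 1 / 2 \<le> \<xi>"
    and "j \<notin> H \<union> C" "p j \<le> c" "sum p C < c"
    and "distinct xs" "set xs = H" and greedy: "greedy p (\<gamma> * p j + \<pi>) xs = (R, \<pi>')"
  shows "machine_inv p \<gamma> \<xi> c (H - R) (insert j C) \<pi>'"
proof -
  have fin: "finite H" "finite C" and "0 \<le> c" "0 \<le> \<pi>"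
    and potential: "\<gamma> * sum p C + sum p H - \<pi> \<le> 2 * c / \<xi>"
    and old: "\<forall>k\<in>H. \<pi> < p k \<and> p k \<le> c / \<xi>"
    using inv unfolding machine_inv_def by auto
  have "R \<subseteq> H"
    using greedy_subset[OF greedy] \<open>set xs = H\<close> by simp
  have paid: "sum p R + \<pi>' = \<gamma> * p j + \<pi>"
    using greedy_sum[OF \<open>distinct xs\<close> greedy] .
  have "0 \<le> \<pi>'"
    using greedy_nonneg[OF greedy] assms(2,3) \<open>0 \<le> \<pi>\<close> by simp
  have rest: "\<forall>k\<in>H - R. \<pi>' < p k"
    using greedy_skipped_gt[OF assms(2) greedy] \<open>set xs = H\<close> by blast
  have sH: "sum p (H - R) = sum p H - sum p R"
    using fin \<open>R \<subseteq> H\<close> by (simp add: sum_diff)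
  have sC: "sum p (insert j C) = sum p C + p j"
    using fin \<open>j \<notin> H \<union> C\<close> by simp
  have potential': "\<gamma> * sum p (insert j C) + sum p (H - R) - \<pi>' \<le> 2 * c / \<xi>"
    using potential sH sC paid by (simp add: distrib_left)
  have "sum p (H - R) + sum p (insert j C) < 2 * c"
  proof (cases "H - R = {}")
    case True
    then have "sum p (H - R) = 0"
      by (simp only: sum.empty)
    then show ?thesis
      using sC \<open>p j \<le> c\<close> \<open>sum p C < c\<close> by linarith
  next
    case False
    then obtain k where "k \<in> H - R" by auto
    then have "\<pi>' < p k" "p k \<le> c / \<xi>" "p k \<le> sum p (H - R)"
      using rest old fin assms(2) by (auto intro: member_le_sum)
    then show ?thesis
      using potential_load_bound[OF assms(3,4,5) \<open>0 \<le> c\<close> potential'] by simp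
  qed
  then show ?thesis
    using inv \<open>0 \<le> \<pi>'\<close> rest old potential' \<open>p j \<le> c\<close> \<open>j \<notin> H \<union> C\<close>
    unfolding machine_inv_def by auto
qed

abbreviation jobs :: "st \<Rightarrow> nat \<Rightarrow> nat set" where
  "jobs \<sigma> i \<equiv> hatJ \<sigma> i \<union> chkJ \<sigma> i"

definition unplaced :: "st \<Rightarrow> nat \<Rightarrow> bool" where
  "unplaced \<sigma> j \<longleftrightarrow> j \<in> arrived \<sigma> \<and> j \<notin> queue \<sigma> \<and> (\<forall>i. j \<notin> jobs \<sigma> i)"

definition jobs_consistent :: "st \<Rightarrow> bool" where
  "jobs_consistent \<sigma> \<longleftrightarrow> queue \<sigma> \<subseteq> arrived \<sigma>
     \<and> (\<forall>i. jobs \<sigma> i \<subseteq> arrived \<sigma> \<and> jobs \<sigma> i \<inter> queue \<sigma> = {})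
     \<and> (\<forall>i i'. i \<noteq> i' \<longrightarrow> jobs \<sigma> i \<inter> jobs \<sigma> i' = {})"

lemma jobs_consistent_cong:
  assumes "jobs_consistent \<sigma>" "\<And>i. jobs \<sigma>' i = jobs \<sigma> i"
    "queue \<sigma>' = queue \<sigma>" "arrived \<sigma>' = arrived \<sigma>"
  shows "jobs_consistent \<sigma>'"
  using assms unfolding jobs_consistent_def by simp

lemma unplaced_cong:
  assumes "unplaced \<sigma> j" "\<And>i. jobs \<sigma>' i = jobs \<sigma> i"
    "queue \<sigma>' = queue \<sigma>" "arrived \<sigma>' = arrived \<sigma>"
  shows "unplaced \<sigma>' j"
  using assms unfolding unplaced_def by simp

lemma jobs_consistent_place:
  assumes cons: "jobs_consistent \<sigma>" and "unplaced \<sigma> j"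
    and "R \<subseteq> hatJ \<sigma> i" "hatJ \<sigma> i \<inter> chkJ \<sigma> i = {}"
  shows "jobs_consistent (\<sigma>\<lparr>hatJ := (hatJ \<sigma>)(i := hatJ \<sigma> i - R),
      chkJ := (chkJ \<sigma>)(i := insert j (chkJ \<sigma> i)), pot := P, queue := queue \<sigma> \<union> R, ph := \<phi>\<rparr>)"
    (is "jobs_consistent ?\<sigma>'")
proof -
  have jobs': "jobs ?\<sigma>' a = (if a = i then insert j (jobs \<sigma> i - R) else jobs \<sigma> a)" for a
    using assms(3,4) by auto
  have R: "R \<subseteq> jobs \<sigma> i"
    using assms(3) by auto
  have Q: "queue \<sigma> \<subseteq> arrived \<sigma>" and J: "jobs \<sigma> a \<subseteq> arrived \<sigma>" "jobs \<sigma> a \<inter> queue \<sigma> = {}"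
    and D: "a \<noteq> a' \<Longrightarrow> jobs \<sigma> a \<inter> jobs \<sigma> a' = {}" for a a'
    using cons unfolding jobs_consistent_def by auto
  have j: "j \<in> arrived \<sigma>" "j \<notin> queue \<sigma>" "j \<notin> jobs \<sigma> a" for a
    using \<open>unplaced \<sigma> j\<close> unfolding unplaced_def by auto
  have "jobs ?\<sigma>' a \<subseteq> arrived \<sigma> \<and> jobs ?\<sigma>' a \<inter> (queue \<sigma> \<union> R) = {}" for a
  proof (cases "a = i")
    case True
    then show ?thesis
      using J[of i] j(1,2) j(3)[of i] R unfolding jobs' by auto
  next
    case False
    then have "jobs \<sigma> a \<inter> R = {}"
      using D[OF False] R by auto
    then show ?thesis
      using J[of a] False unfolding jobs' by auto
  qed
  moreover have "jobs ?\<sigma>' a \<inter> jobs ?\<sigma>' a' = {}" if "a \<noteq> a'" for a a'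
    using D[OF that] D[of a i] D[of i a'] j(3)[of a] j(3)[of a'] that unfolding jobs' by auto
  ultimately show ?thesis
    using Q R J[of i] unfolding jobs_consistent_def by auto
qed

(* The upper bound on \<xi> is needed only for the very first job, which becomes a new job
   without any potential to pay for it. *)
locale amortized_framework =
  fixes m :: nat and s p :: "nat \<Rightarrow> real" and \<eta> \<gamma> \<xi> :: real
  assumes machines: "1 \<le> m" and speed_pos: "\<And>i. i < m \<Longrightarrow> 0 < s i"
    and size_pos: "\<And>j. 0 < p j" and eta_le_1: "\<eta> \<le> 1"
    and gamma_pos: "0 < \<gamma>" and gamma_le_1: "\<gamma> \<le> 1"
    and xi_lower: "1 / \<gamma> + 1 / 2 \<le> \<xi>" and xi_upper: "\<gamma> * \<xi> \<le> 2"
begin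

lemma size_nonneg: "0 \<le> p j"
  using size_pos less_imp_le by blast

lemma xi_ge_1: "1 \<le> \<xi>"
proof -
  have "1 \<le> 1 / \<gamma>"
    using gamma_pos gamma_le_1 by simp
  then show ?thesis
    using xi_lower by linarith
qed

definition phase_inv :: "st \<Rightarrow> bool" where
  "phase_inv \<sigma> \<longleftrightarrow> (case ph \<sigma> of
      Idle \<Rightarrow> True
    | Search j \<Rightarrow> unplaced \<sigma> j
    | Place j i \<Rightarrow> unplaced \<sigma> j \<and> i < m \<and> eligible s p 1 \<sigma> j i \<and> \<not> saturated s p \<sigma> i)"

definition framework_inv :: "st \<Rightarrow> bool" where
  "framework_inv \<sigma> \<longleftrightarrow> jobs_consistent \<sigma> \<and> phase_inv \<sigma>
     \<and> (\<forall>i<m. machine_inv p \<gamma> \<xi> (T \<sigma> * s i) (hatJ \<sigma> i) (chkJ \<sigma> i) (pot \<sigma> i))"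

lemma framework_inv_init: "framework_inv init_st"
  using xi_ge_1 machine_inv_empty
  unfolding framework_inv_def jobs_consistent_def phase_inv_def init_st_def by simp

lemma framework_inv_first:
  assumes "framework_inv \<sigma>" "arrived \<sigma> = {}" "ph \<sigma> = Idle"
  shows "framework_inv (\<sigma>\<lparr>T := p j / s 0, chkJ := (chkJ \<sigma>)(0 := insert j (chkJ \<sigma> 0)),
    arrived := {j}\<rparr>)"
proof -
  have empty: "hatJ \<sigma> i = {}" "chkJ \<sigma> i = {}" "queue \<sigma> = {}" for i
    using assms(1,2) unfolding framework_inv_def jobs_consistent_def by auto
  have "0 \<le> pot \<sigma> i" if "i < m" for i
    using assms(1) that unfolding framework_inv_def machine_inv_def by auto
  moreover have "0 < s 0"
    using speed_pos machines by simp
  moreover have "0 \<le> p j / s 0 * s i" if "i < m" for i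
    using \<open>0 < s 0\<close> speed_pos[OF that] size_pos[of j] by (simp add: less_imp_le)
  ultimately have "machine_inv p \<gamma> \<xi> (p j / s 0 * s i) (hatJ \<sigma> i)
      (((chkJ \<sigma>)(0 := insert j (chkJ \<sigma> 0))) i) (pot \<sigma> i)" if "i < m" for i
    using that machine_inv_singleton[of p j] machine_inv_empty size_pos[of j] xi_ge_1 xi_upper
    by (auto simp: empty)
  then show ?thesis
    using assms(3) empty unfolding framework_inv_def jobs_consistent_def phase_inv_def
    by auto
qed

lemma framework_inv_arrive:
  assumes "framework_inv \<sigma>" "j \<notin> arrived \<sigma>" "ph \<sigma> = Idle" "queue \<sigma> = {}"
  shows "framework_inv (\<sigma>\<lparr>queue := {j}, arrived := insert j (arrived \<sigma>)\<rparr>)"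
  using assms unfolding framework_inv_def jobs_consistent_def phase_inv_def by auto

lemma framework_inv_pop:
  assumes "framework_inv \<sigma>" "ph \<sigma> = Idle" "j \<in> queue \<sigma>"
  shows "framework_inv (\<sigma>\<lparr>queue := queue \<sigma> - {j}, ph := Search j\<rparr>)"
  using assms unfolding framework_inv_def jobs_consistent_def phase_inv_def unplaced_def by auto

lemma framework_inv_T_nonneg: "framework_inv \<sigma> \<Longrightarrow> 0 \<le> T \<sigma>"
  using machines speed_pos[of 0] unfolding framework_inv_def machine_inv_def
  by (auto simp: zero_le_mult_iff)

lemma framework_inv_move:
  assumes inv: "framework_inv \<sigma>" and search: "ph \<sigma> = Search j" and "i \<in> Mt m s p \<eta> \<sigma> j"
  shows "framework_inv (move_step p \<eta> \<sigma> j i)"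
    and "\<not> saturated s p (move_step p \<eta> \<sigma> j i) i \<Longrightarrow>
      framework_inv ((move_step p \<eta> \<sigma> j i)\<lparr>ph := Place j i\<rparr>)"
proof -
  define K where "K = {k \<in> hatJ \<sigma> i. p j / \<eta> \<le> p k}"
  define \<sigma>' where "\<sigma>' = move_step p \<eta> \<sigma> j i"
  have "{k \<in> hatJ \<sigma> i. \<not> p j / \<eta> \<le> p k} = hatJ \<sigma> i - K"
    unfolding K_def by auto
  then have \<sigma>': "hatJ \<sigma>' = (hatJ \<sigma>)(i := hatJ \<sigma> i - K)"
    "chkJ \<sigma>' = (chkJ \<sigma>)(i := chkJ \<sigma> i \<union> K)" "T \<sigma>' = T \<sigma>" "pot \<sigma>' = pot \<sigma>"
    "queue \<sigma>' = queue \<sigma>" "arrived \<sigma>' = arrived \<sigma>" "ph \<sigma>' = ph \<sigma>"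
    unfolding \<sigma>'_def move_step_def by (auto simp: K_def)
  have same_jobs: "jobs \<sigma>' a = jobs \<sigma> a" for a
    unfolding \<sigma>' K_def by auto
  have "i < m" and eligible: "eligible s p \<eta> \<sigma> j i"
    using \<open>i \<in> Mt m s p \<eta> \<sigma> j\<close> unfolding Mt_def by auto
  have "machine_inv p \<gamma> \<xi> (T \<sigma> * s i) (hatJ \<sigma> i) (chkJ \<sigma> i) (pot \<sigma> i)"
    using inv \<open>i < m\<close> unfolding framework_inv_def by blast
  moreover have "K \<subseteq> hatJ \<sigma> i"
    unfolding K_def by blast
  ultimately have "machine_inv p \<gamma> \<xi> (T \<sigma> * s i) (hatJ \<sigma> i - K) (chkJ \<sigma> i \<union> K) (pot \<sigma> i)"
    using machine_inv_move size_nonneg gamma_le_1 xi_ge_1 by blast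
  then have machines': "\<forall>a<m. machine_inv p \<gamma> \<xi> (T \<sigma>' * s a) (hatJ \<sigma>' a) (chkJ \<sigma>' a) (pot \<sigma>' a)"
    using inv unfolding framework_inv_def \<sigma>' by simp
  have "jobs_consistent \<sigma>'" "unplaced \<sigma>' j"
    using inv search jobs_consistent_cong[OF _ same_jobs] unplaced_cong[OF _ same_jobs]
    unfolding framework_inv_def phase_inv_def \<sigma>' by auto
  then show "framework_inv (move_step p \<eta> \<sigma> j i)"
    using machines' search unfolding framework_inv_def phase_inv_def \<sigma>'_def[symmetric] \<sigma>'
    by simp
  assume "\<not> saturated s p (move_step p \<eta> \<sigma> j i) i"
  moreover have "eligible s p 1 \<sigma>' j i"
    using eligible eta_le_1 framework_inv_T_nonneg[OF inv] mult_right_mono[of \<eta> 1 "T \<sigma>"]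
    unfolding eligible_def \<sigma>' by simp
  ultimately show "framework_inv ((move_step p \<eta> \<sigma> j i)\<lparr>ph := Place j i\<rparr>)"
    using \<open>jobs_consistent \<sigma>'\<close> \<open>unplaced \<sigma>' j\<close> machines' \<open>i < m\<close>
    unfolding framework_inv_def phase_inv_def jobs_consistent_def unplaced_def saturated_def
      new_load_def eligible_def \<sigma>'_def[symmetric]
    by simp
qed

lemma framework_inv_raise:
  assumes inv: "framework_inv \<sigma>" and search: "ph \<sigma> = Search j"
  shows "framework_inv (\<sigma>\<lparr>T := \<xi> * T \<sigma>, hatJ := (\<lambda>i. hatJ \<sigma> i \<union> chkJ \<sigma> i),
    chkJ := (\<lambda>_. {}), pot := (\<lambda>_. 0)\<rparr>)" (is "framework_inv ?\<sigma>'")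
proof -
  have same_jobs: "jobs ?\<sigma>' i = jobs \<sigma> i" for i
    by simp
  have "machine_inv p \<gamma> \<xi> (\<xi> * T \<sigma> * s i) (jobs \<sigma> i) {} 0" if "i < m" for i
  proof -
    have "machine_inv p \<gamma> \<xi> (T \<sigma> * s i) (hatJ \<sigma> i) (chkJ \<sigma> i) (pot \<sigma> i)"
      using inv that unfolding framework_inv_def by blast
    from machine_inv_raise[OF this size_pos xi_ge_1] show ?thesis
      by (simp add: mult.assoc)
  qed
  moreover have "jobs_consistent ?\<sigma>'" "unplaced ?\<sigma>' j"
    using inv search jobs_consistent_cong[OF _ same_jobs] unplaced_cong[OF _ same_jobs]
    unfolding framework_inv_def phase_inv_def by auto
  ultimately show ?thesis
    using search unfolding framework_inv_def phase_inv_def by simp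
qed

lemma framework_inv_place:
  assumes inv: "framework_inv \<sigma>" and place: "ph \<sigma> = Place j i"
    and "distinct xs" "set xs = hatJ \<sigma> i" and greedy: "greedy p (\<gamma> * p j + pot \<sigma> i) xs = (R, \<pi>)"
  shows "framework_inv (\<sigma>\<lparr>hatJ := (hatJ \<sigma>)(i := hatJ \<sigma> i - R),
    chkJ := (chkJ \<sigma>)(i := insert j (chkJ \<sigma> i)), pot := (pot \<sigma>)(i := \<pi>),
    queue := queue \<sigma> \<union> R, ph := Idle\<rparr>)"
proof -
  have "unplaced \<sigma> j" "i < m" "eligible s p 1 \<sigma> j i" "\<not> saturated s p \<sigma> i"
    using inv place unfolding framework_inv_def phase_inv_def by auto
  have mi: "machine_inv p \<gamma> \<xi> (T \<sigma> * s i) (hatJ \<sigma> i) (chkJ \<sigma> i) (pot \<sigma> i)"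
    using inv \<open>i < m\<close> unfolding framework_inv_def by blast
  have "0 < s i"
    using speed_pos \<open>i < m\<close> by simp
  then have "p j \<le> T \<sigma> * s i" "sum p (chkJ \<sigma> i) < T \<sigma> * s i"
    using \<open>eligible s p 1 \<sigma> j i\<close> \<open>\<not> saturated s p \<sigma> i\<close>
    unfolding eligible_def saturated_def new_load_def by (simp_all add: divide_le_eq le_divide_eq)
  moreover have "j \<notin> jobs \<sigma> i"
    using \<open>unplaced \<sigma> j\<close> unfolding unplaced_def by simp
  ultimately have "machine_inv p \<gamma> \<xi> (T \<sigma> * s i) (hatJ \<sigma> i - R) (insert j (chkJ \<sigma> i)) \<pi>"
    using machine_inv_place[OF mi size_nonneg gamma_pos gamma_le_1 xi_lower _ _ _ assms(3,4) greedy]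
    by blast
  moreover have "R \<subseteq> hatJ \<sigma> i"
    using greedy_subset[OF greedy] assms(4) by simp
  moreover have "hatJ \<sigma> i \<inter> chkJ \<sigma> i = {}"
    using mi unfolding machine_inv_def by blast
  ultimately show ?thesis
    using inv jobs_consistent_place[OF _ \<open>unplaced \<sigma> j\<close>]
    unfolding framework_inv_def phase_inv_def by auto
qed

lemma reach_framework_inv: "reach m s p \<eta> \<gamma> \<xi> \<sigma> \<Longrightarrow> framework_inv \<sigma>"
proof (induction rule: reach.induct)
  case init
  show ?case by (rule framework_inv_init)
next
  case (first \<sigma> j)
  from first.IH first.hyps(2,3) show ?case by (rule framework_inv_first)
next
  case (arrive \<sigma> j)
  from arrive.IH arrive.hyps(3-5) show ?case by (rule framework_inv_arrive)
next
  case (pop \<sigma> j)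
  from pop.IH pop.hyps(2,3) show ?case by (rule framework_inv_pop)
next
  case (move \<sigma> j i)
  then show ?case using framework_inv_move[OF move.IH move.hyps(2,3)] by simp
next
  case (raise \<sigma> j)
  from raise.IH raise.hyps(2) show ?case by (rule framework_inv_raise)
next
  case (place \<sigma> j i xs R \<pi>)
  from place.IH place.hyps(2-4,6) show ?case by (rule framework_inv_place)
qed

lemma reach_total_load_le:
  assumes "reach m s p \<eta> \<gamma> \<xi> \<sigma>" "i < m"
  shows "total_load s p \<sigma> i \<le> 2 * T \<sigma>"
proof -
  have "sum p (jobs \<sigma> i) \<le> 2 * (T \<sigma> * s i)"
    using reach_framework_inv[OF assms(1)] assms(2) machine_inv_load
    unfolding framework_inv_def by blast
  then show ?thesis
    using speed_pos[OF assms(2)] unfolding total_load_def by (simp add: divide_le_eq mult_ac)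
qed

end

theorem lemma4:
  fixes m :: nat and s p :: "nat \<Rightarrow> real" and gamma :: real and \<sigma> :: st and i :: nat
  assumes "m \<ge> 1"
    and "\<forall>i<m. s i > 0"
    and "\<forall>i j. i \<le> j \<and> j < m \<longrightarrow> s j \<le> s i"
    and "\<forall>j. p j > 0"
    and "0 < gamma" and "gamma < 1"
    and "reach m s p 1 gamma (1 / gamma + 1 / 2) \<sigma>"
    and "i < m"
  shows "total_load s p \<sigma> i \<le> (1 + 1) * T \<sigma>"
proof -
  have "gamma * (1 / gamma + 1 / 2) \<le> 2"
    using assms(5,6) by (simp add: field_simps)
  then interpret amortized_framework m s p 1 gamma "1 / gamma + 1 / 2"
    using assms(1,2,4,5,6) by unfold_locales auto
  show ?thesis
    using reach_total_load_le[OF assms(7,8)] by simp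
qed

end
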